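(* Let $N\in\mathbb N$. For all nonzero $f,g\in R_J(N)$, $$\nu_J(fg)=\nu_J(f)+\nu_J(g),$$ where the right-hand side is the Minkowski sum of subsets of $\mathbb R^2$.
   Context: $R(N)=\mathbb C[\zeta^{1/N},\zeta^{-1/N}]((q^{1/N}))$ is the ring of formal series $f=\sum_{n,r\in\frac1N\mathbb Z}c(n,r)q^n\zeta^r$ such that for each $n$ only finitely many $r$ have $c(n,r)\ne0$ and $n$ is bounded below on the support $\operatorname{supp}(f)=\{(n,r): c(n,r)\neq0\}$. $R_J(N)$ is the set of $f\in R(N)$ for which there exist $a>0$ and $b,c\in\mathbb R$ with $\operatorname{supp}(f)\subseteq\{(n,r)\in\mathbb R^2: n\ge ar^2+br+c\}$ (it is a subring of $R(N)$). For $P\subseteq\mathbb R^2$, $\operatorname{conv}(P;\vec A)=\operatorname{conv}(P)+[0,\infty)\times\{0\}$. The Jacobi valuation is $\nu_J(f)=\operatorname{Closure}_{\mathbb R^2}(\operatorname{conv}(\operatorname{supp}(f);\vec A))$. *)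

theory Defs
  imports "HOL-Analysis.Analysis"
begin

text \<open>A formal series f = sum c(n,r) q^n zeta^r is represented by its coefficient
function c :: real \<times> real \<Rightarrow> complex, (n,r) \<mapsto> c(n,r).\<close>

type_synonym fseries = "real \<times> real \<Rightarrow> complex"

definition supp :: "fseries \<Rightarrow> (real \<times> real) set" where
  "supp f = {p. f p \<noteq> 0}"

definition in_R :: "nat \<Rightarrow> fseries \<Rightarrow> bool" where
  "in_R N f \<longleftrightarrow>
     supp f \<subseteq> {(of_int a / real N, of_int b / real N) | a b. True} \<and>
     (\<forall>n. finite {r. f (n, r) \<noteq> 0}) \<and>
     (\<exists>m. \<forall>n r. f (n, r) \<noteq> 0 \<longrightarrow> m \<le> n)"

definition in_RJ :: "nat \<Rightarrow> fseries \<Rightarrow> bool" where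
  "in_RJ N f \<longleftrightarrow> in_R N f \<and>
     (\<exists>a b c. a > (0::real) \<and> (\<forall>n r. f (n, r) \<noteq> 0 \<longrightarrow> n \<ge> a * r\<^sup>2 + b * r + c))"

text \<open>Product of formal series (Cauchy product); for elements of R(N) the
  summation set is finite.\<close>
definition fmult :: "fseries \<Rightarrow> fseries \<Rightarrow> fseries" where
  "fmult f g = (\<lambda>x. \<Sum>p\<in>{p. f p \<noteq> 0 \<and> g (x - p) \<noteq> 0}. f p * g (x - p))"

definition minkowski :: "(real \<times> real) set \<Rightarrow> (real \<times> real) set \<Rightarrow> (real \<times> real) set" where
  "minkowski A B = {a + b | a b. a \<in> A \<and> b \<in> B}"

definition conv_A :: "(real \<times> real) set \<Rightarrow> (real \<times> real) set" where
  "conv_A P = minkowski (convex hull P) ({0..} \<times> {0})"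

definition nu_J :: "fseries \<Rightarrow> (real \<times> real) set" where
  "nu_J f = closure (conv_A (supp f))"

end

theory Submission
  imports Defs
begin

text \<open>For a direction \<open>w\<close> with \<open>fst w > 0\<close>, the supports of \<open>f\<close> and \<open>g\<close> are lattice
  points above a parabola, so \<open>w\<close> attains a lexicographic minimum (first the value of \<open>w\<close>,
  then the second coordinate) on each of them; the Cauchy product at the sum of the two
  minimisers has a single term and is therefore non-zero. Hence every half-plane
  \<open>{x. t \<le> inner w x}\<close> with \<open>fst w \<ge> 0\<close> containing \<open>supp (fg)\<close> (the case \<open>fst w = 0\<close>
  by tilting \<open>w\<close>) also contains \<open>supp f + supp g\<close>, and the separating hyperplane theorem
  yields \<open>\<nu>\<^sub>J f + \<nu>\<^sub>J g \<subseteq> \<nu>\<^sub>J (fg)\<close>. Conversely \<open>supp (fg) \<subseteq> supp f + supp g\<close>, and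
  \<open>\<nu>\<^sub>J f + \<nu>\<^sub>J g\<close> is convex, stable under adding \<open>(s, 0)\<close> for \<open>s \<ge> 0\<close>, and closed, because
  \<open>\<nu>\<^sub>J f\<close> lies in a parabolic region whose truncations \<open>fst x \<le> K\<close> are compact.\<close>

subsection \<open>Horizontal rays and the Jacobi valuation\<close>

definition ray_stable :: "(real \<times> real) set \<Rightarrow> bool" where
  "ray_stable C \<longleftrightarrow> (\<forall>x\<in>C. \<forall>s\<ge>0. x + (s, 0) \<in> C)"

lemma minkowski_eq_UN: "minkowski A B = (\<Union>x\<in>A. \<Union>y\<in>B. {x + y})"
  unfolding minkowski_def by blast

lemma minkowski_mono: "A \<subseteq> A' \<Longrightarrow> B \<subseteq> B' \<Longrightarrow> minkowski A B \<subseteq> minkowski A' B'"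
  unfolding minkowski_eq_UN by auto

lemma convex_minkowski: "convex A \<Longrightarrow> convex B \<Longrightarrow> convex (minkowski A B)"
  unfolding minkowski_eq_UN by (rule convex_sums)

lemma ray_stable_minkowski_left:
  assumes "ray_stable A"
  shows "ray_stable (minkowski A B)"
  unfolding ray_stable_def
proof (intro ballI allI impI)
  fix x and s :: real
  assume "x \<in> minkowski A B" "0 \<le> s"
  then obtain a b where "x = a + b" "a \<in> A" "b \<in> B"
    unfolding minkowski_def by blast
  moreover from \<open>a \<in> A\<close> have "a + (s, 0) \<in> A"
    using assms \<open>0 \<le> s\<close> by (simp add: ray_stable_def)
  moreover have "a + b + (s, 0) = (a + (s, 0)) + b"
    by (simp only: add.assoc add.commute[of b])
  ultimately show "x + (s, 0) \<in> minkowski A B"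
    unfolding minkowski_def by blast
qed

lemma minkowski_commute: "minkowski A B = minkowski B A"
  unfolding minkowski_def using add.commute by blast

lemma ray_stable_minkowski_right: "ray_stable B \<Longrightarrow> ray_stable (minkowski A B)"
  by (metis minkowski_commute ray_stable_minkowski_left)

lemma ray_stable_halfplane: "0 \<le> fst w \<Longrightarrow> ray_stable {x. t \<le> inner w x}"
  unfolding ray_stable_def by (auto simp: inner_add_right inner_Pair_0 intro: add_increasing2)

lemma ray_stable_closure:
  assumes "ray_stable C"
  shows "ray_stable (closure C)"
  unfolding ray_stable_def
proof (intro ballI allI impI)
  fix x and s :: real
  assume "x \<in> closure C" "0 \<le> s"
  have "(+) (s, 0) ` C \<subseteq> C"
    using assms \<open>0 \<le> s\<close> by (auto simp: ray_stable_def add.commute)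
  then have "closure ((+) (s, 0) ` C) \<subseteq> closure C"
    by (rule closure_mono)
  moreover have "(s, 0) + x \<in> closure ((+) (s, 0) ` C)"
    unfolding closure_translation using \<open>x \<in> closure C\<close> by blast
  ultimately show "x + (s, 0) \<in> closure C"
    by (metis add.commute subsetD)
qed

lemma ray_stable_halfplane_normal:
  assumes "ray_stable S" "x\<^sub>0 \<in> S" "S \<subseteq> {x. t \<le> inner w x}"
  shows "0 \<le> fst w"
proof (rule ccontr)
  assume "\<not> 0 \<le> fst w"
  define s where "s = (inner w x\<^sub>0 - t + 1) / - fst w"
  have "t \<le> inner w x\<^sub>0"
    using assms(2,3) by blast
  then have "0 \<le> s"
    using \<open>\<not> 0 \<le> fst w\<close> unfolding s_def by (intro divide_nonneg_pos) auto
  then have "t \<le> inner w (x\<^sub>0 + (s, 0))"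
    using assms(1,2,3) unfolding ray_stable_def by blast
  also have "\<dots> = inner w x\<^sub>0 + fst w * s"
    by (simp add: inner_add_right inner_Pair_0)
  also have "fst w * s = t - 1 - inner w x\<^sub>0"
    using \<open>\<not> 0 \<le> fst w\<close> unfolding s_def by simp
  finally show False by simp
qed

lemma convex_conv_A: "convex (conv_A S)"
  unfolding conv_A_def
  by (intro convex_minkowski convex_convex_hull convex_Times) auto

lemma ray_stable_conv_A: "ray_stable (conv_A S)"
  unfolding conv_A_def by (rule ray_stable_minkowski_right) (auto simp: ray_stable_def)

lemma subset_conv_A: "S \<subseteq> conv_A S"
  unfolding conv_A_def minkowski_def
  by (force intro: hull_inc simp: zero_prod_def)

lemma conv_A_minimal:
  assumes "convex C" "ray_stable C" "S \<subseteq> C"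
  shows "conv_A S \<subseteq> C"
proof -
  have "convex hull S \<subseteq> C"
    using assms by (intro hull_minimal)
  then show ?thesis
    using assms(2) unfolding conv_A_def minkowski_def ray_stable_def by fastforce
qed

lemma supp_subset_nu_J: "supp f \<subseteq> nu_J f"
  unfolding nu_J_def using subset_conv_A closure_subset by blast

lemma closed_nu_J: "closed (nu_J f)"
  unfolding nu_J_def by simp

lemma convex_nu_J: "convex (nu_J f)"
  unfolding nu_J_def by (intro convex_closure convex_conv_A)

lemma ray_stable_nu_J: "ray_stable (nu_J f)"
  unfolding nu_J_def by (intro ray_stable_closure ray_stable_conv_A)

lemma nu_J_minimal:
  assumes "closed C" "convex C" "ray_stable C" "supp f \<subseteq> C"
  shows "nu_J f \<subseteq> C"
  unfolding nu_J_def using assms by (intro closure_minimal conv_A_minimal)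

subsection \<open>Parabolic regions\<close>

lemma abs_le_of_quadratic_nonpos:
  fixes a b c r :: real
  assumes "a > 0" "a * r\<^sup>2 + b * r + c \<le> 0"
  shows "\<bar>r\<bar> \<le> (\<bar>b\<bar> + \<bar>c\<bar>) / a + 1"
proof (rule ccontr)
  define R where "R = (\<bar>b\<bar> + \<bar>c\<bar>) / a + 1"
  assume "\<not> \<bar>r\<bar> \<le> (\<bar>b\<bar> + \<bar>c\<bar>) / a + 1"
  then have "R < \<bar>r\<bar>" "1 \<le> R"
    using assms(1) by (simp_all add: R_def)
  have "\<bar>b\<bar> + \<bar>c\<bar> < a * \<bar>r\<bar>"
    using \<open>R < \<bar>r\<bar>\<close> assms(1) by (simp add: R_def field_simps)
  then have "(\<bar>b\<bar> + \<bar>c\<bar>) * \<bar>r\<bar> < (a * \<bar>r\<bar>) * \<bar>r\<bar>"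
    using \<open>1 \<le> R\<close> \<open>R < \<bar>r\<bar>\<close> by (intro mult_strict_right_mono) auto
  also have "(a * \<bar>r\<bar>) * \<bar>r\<bar> = a * r\<^sup>2"
    by (simp add: power2_eq_square abs_mult_self_eq mult.assoc)
  finally have "(\<bar>b\<bar> + \<bar>c\<bar>) * \<bar>r\<bar> < a * r\<^sup>2" .
  moreover have "\<bar>c\<bar> \<le> \<bar>c\<bar> * \<bar>r\<bar>"
    using \<open>1 \<le> R\<close> \<open>R < \<bar>r\<bar>\<close> mult_left_mono[of 1 "\<bar>r\<bar>" "\<bar>c\<bar>"] by simp
  moreover have "- (b * r) \<le> \<bar>b\<bar> * \<bar>r\<bar>"
    by (simp flip: abs_mult)
  ultimately show False
    using assms(2) by (simp add: distrib_right)
qed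

definition parabolic_region :: "real \<Rightarrow> real \<Rightarrow> real \<Rightarrow> (real \<times> real) set" where
  "parabolic_region a b c = {x. a * (snd x)\<^sup>2 + b * snd x + c \<le> fst x}"

lemma closed_parabolic_region: "closed (parabolic_region a b c)"
  unfolding parabolic_region_def by (intro closed_Collect_le continuous_intros)

lemma convex_parabolic_region:
  assumes "0 \<le> a"
  shows "convex (parabolic_region a b c)"
proof (rule convexI)
  fix x y :: "real \<times> real" and u v :: real
  assume "x \<in> parabolic_region a b c" "y \<in> parabolic_region a b c" "0 \<le> u" "0 \<le> v" "u + v = 1"
  define q where "q r = a * r\<^sup>2 + b * r + c" for r
  have "v = 1 - u"
    using \<open>u + v = 1\<close> by simp
  have "u * q (snd x) + v * q (snd y) - q (u * snd x + v * snd y) = a * (u * v) * (snd x - snd y)\<^sup>2"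
    unfolding q_def \<open>v = 1 - u\<close> by (simp add: power2_eq_square algebra_simps)
  also have "\<dots> \<ge> 0"
    using assms \<open>0 \<le> u\<close> \<open>0 \<le> v\<close> by simp
  finally have "q (u * snd x + v * snd y) \<le> u * q (snd x) + v * q (snd y)"
    by simp
  also have "\<dots> \<le> u * fst x + v * fst y"
    using \<open>x \<in> _\<close> \<open>y \<in> _\<close> \<open>0 \<le> u\<close> \<open>0 \<le> v\<close>
    unfolding parabolic_region_def q_def by (intro add_mono mult_left_mono) auto
  finally show "u *\<^sub>R x + v *\<^sub>R y \<in> parabolic_region a b c"
    unfolding parabolic_region_def q_def by simp
qed

lemma ray_stable_parabolic_region: "ray_stable (parabolic_region a b c)"
  unfolding ray_stable_def parabolic_region_def by auto

lemma bounded_parabolic_region_Int_halfplane: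
  assumes "a > 0" "fst w > 0"
  shows "bounded (parabolic_region a b c \<inter> {x. inner w x \<le> K})"
proof -
  obtain \<alpha> \<beta> where w: "w = (\<alpha>, \<beta>)" by fastforce
  define R where "R = (\<bar>\<alpha> * b + \<beta>\<bar> + \<bar>\<alpha> * c - K\<bar>) / (\<alpha> * a) + 1"
  define n\<^sub>0 where "n\<^sub>0 = - \<bar>b\<bar> * R - \<bar>c\<bar>"
  define n\<^sub>1 where "n\<^sub>1 = (\<bar>K\<bar> + \<bar>\<beta>\<bar> * R) / \<alpha>"
  have "parabolic_region a b c \<inter> {x. inner w x \<le> K} \<subseteq> {n\<^sub>0..n\<^sub>1} \<times> {-R..R}"
  proof
    fix x
    assume "x \<in> parabolic_region a b c \<inter> {x. inner w x \<le> K}"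
    moreover obtain n r where x: "x = (n, r)"
      by fastforce
    ultimately have n: "a * r\<^sup>2 + b * r + c \<le> n" and K: "\<alpha> * n + \<beta> * r \<le> K"
      by (simp_all add: parabolic_region_def w)
    have "\<alpha> > 0"
      using assms(2) by (simp add: w)
    then have "(\<alpha> * a) * r\<^sup>2 + (\<alpha> * b + \<beta>) * r + (\<alpha> * c - K) \<le> 0"
      using mult_left_mono[OF n, of \<alpha>] K by (simp add: algebra_simps)
    then have r: "\<bar>r\<bar> \<le> R"
      unfolding R_def using \<open>\<alpha> > 0\<close> assms(1) by (intro abs_le_of_quadratic_nonpos) simp_all
    then have "\<bar>b * r\<bar> \<le> \<bar>b\<bar> * R" "\<bar>\<beta> * r\<bar> \<le> \<bar>\<beta>\<bar> * R"
      by (simp_all add: abs_mult mult_left_mono)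
    moreover have "0 \<le> a * r\<^sup>2"
      using assms(1) by simp
    ultimately have "n\<^sub>0 \<le> n" "\<alpha> * n \<le> \<bar>K\<bar> + \<bar>\<beta>\<bar> * R"
      using n K unfolding n\<^sub>0_def by (linarith, linarith)
    then show "x \<in> {n\<^sub>0..n\<^sub>1} \<times> {-R..R}"
      using r x \<open>\<alpha> > 0\<close> by (simp add: n\<^sub>1_def pos_le_divide_eq mult.commute abs_le_iff)
  qed
  then show ?thesis
    by (rule bounded_subset[rotated]) (intro bounded_Times bounded_closed_interval)
qed

lemma fst_ge_on_parabolic_region:
  assumes "a > 0" "x \<in> parabolic_region a b c"
  shows "c - b\<^sup>2 / (4 * a) \<le> fst x"
proof -
  have "a * (snd x)\<^sup>2 + b * snd x + c - (c - b\<^sup>2 / (4 * a)) = (2 * a * snd x + b)\<^sup>2 / (4 * a)"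
    using assms(1) by (simp add: field_simps power2_eq_square)
  also have "\<dots> \<ge> 0"
    using assms(1) by simp
  finally show ?thesis
    using assms(2) by (simp add: parabolic_region_def)
qed

lemma finite_lattice_Int_bounded:
  assumes "N > 0" "bounded B"
  shows "finite ({(of_int i / real N, of_int j / real N) | i j. True} \<inter> B)"
proof -
  obtain R where R: "\<And>x. x \<in> B \<Longrightarrow> norm x \<le> R"
    using assms(2) by (auto simp: bounded_iff)
  define k where "k = \<lceil>R * real N\<rceil>"
  define lat where "lat = (\<lambda>(i, j). (of_int i / real N, of_int j / real N :: real))"
  have "{(of_int i / real N, of_int j / real N) | i j. True} \<inter> B \<subseteq> lat ` ({-k..k} \<times> {-k..k})"
  proof (clarify)
    fix i j :: int
    assume "(of_int i / real N, of_int j / real N) \<in> B"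
    then have "norm (of_int i / real N, of_int j / real N) \<le> R"
      by (rule R)
    then have "\<bar>of_int i / real N\<bar> \<le> R" "\<bar>of_int j / real N\<bar> \<le> R"
      using norm_fst_le[of "of_int i / real N" "of_int j / real N"]
        norm_snd_le[of "of_int j / real N" "of_int i / real N"]
      by (simp_all only: real_norm_def)
    then have "\<bar>of_int i\<bar> \<le> R * real N" "\<bar>of_int j\<bar> \<le> R * real N"
      using assms(1) by (simp_all add: abs_divide pos_divide_le_eq)
    then have "\<bar>i\<bar> \<le> k" "\<bar>j\<bar> \<le> k"
      unfolding k_def by (simp_all add: le_ceiling_iff)
    then show "(of_int i / real N, of_int j / real N) \<in> lat ` ({-k..k} \<times> {-k..k})"
      by (intro image_eqI[of _ _ "(i, j)"]) (auto simp: lat_def abs_le_iff)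
  qed
  then show ?thesis
    by (rule finite_subset) simp
qed

subsection \<open>Supports of series in \<open>R\<^sub>J(N)\<close>\<close>

lemma supp_subset_lattice:
  "in_RJ N f \<Longrightarrow> supp f \<subseteq> {(of_int i / real N, of_int j / real N) | i j. True}"
  unfolding in_RJ_def in_R_def by blast

lemma supp_subset_parabolic_region:
  assumes "in_RJ N f"
  obtains a b c where "a > 0" "supp f \<subseteq> parabolic_region a b c"
proof -
  obtain a b c where "a > 0" and abc: "\<And>n r. f (n, r) \<noteq> 0 \<Longrightarrow> a * r\<^sup>2 + b * r + c \<le> n"
    using assms unfolding in_RJ_def by blast
  have "supp f \<subseteq> parabolic_region a b c"
    unfolding supp_def parabolic_region_def using abc by force
  with \<open>a > 0\<close> show ?thesis
    by (rule that)
qed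

lemma nu_J_subset_parabolic_region:
  assumes "in_RJ N f"
  obtains a b c where "a > 0" "nu_J f \<subseteq> parabolic_region a b c"
  using supp_subset_parabolic_region[OF assms]
  by (metis nu_J_minimal closed_parabolic_region convex_parabolic_region
      ray_stable_parabolic_region less_imp_le)

lemma compact_nu_J_Int_halfplane:
  assumes "in_RJ N f"
  shows "compact (nu_J f \<inter> {x. fst x \<le> K})"
proof -
  obtain a b c where "a > 0" and nu: "nu_J f \<subseteq> parabolic_region a b c"
    using nu_J_subset_parabolic_region[OF assms] .
  have "bounded (parabolic_region a b c \<inter> {x. inner (1, 0) x \<le> K})"
    using \<open>a > 0\<close> by (rule bounded_parabolic_region_Int_halfplane) simp
  then have "bounded (parabolic_region a b c \<inter> {x. fst x \<le> K})"
    by (simp add: inner_prod_def)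
  then have "bounded (nu_J f \<inter> {x. fst x \<le> K})"
    by (rule bounded_subset) (use nu in blast)
  moreover have "closed (nu_J f \<inter> {x. fst x \<le> K})"
    by (intro closed_Int closed_nu_J closed_Collect_le continuous_intros)
  ultimately show ?thesis
    by (simp add: compact_eq_bounded_closed)
qed

lemma fst_bounded_below_nu_J:
  assumes "in_RJ N f"
  obtains m where "\<And>x. x \<in> nu_J f \<Longrightarrow> m \<le> fst x"
proof -
  obtain a b c where "a > 0" "nu_J f \<subseteq> parabolic_region a b c"
    using nu_J_subset_parabolic_region[OF assms] .
  then show ?thesis
    using that[of "c - b\<^sup>2 / (4 * a)"] fst_ge_on_parabolic_region by blast
qed

lemma finite_supp_Int_halfplane:
  assumes "in_RJ N f" "N > 0" "fst w > 0"
  shows "finite (supp f \<inter> {x. inner w x \<le> K})"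
proof -
  obtain a b c where "a > 0" and supp: "supp f \<subseteq> parabolic_region a b c"
    using supp_subset_parabolic_region[OF assms(1)] .
  have "supp f \<inter> {x. inner w x \<le> K} \<subseteq>
      {(of_int i / real N, of_int j / real N) | i j. True} \<inter> (parabolic_region a b c \<inter> {x. inner w x \<le> K})"
    using supp supp_subset_lattice[OF assms(1)] by blast
  moreover have "finite \<dots>"
    using assms(2) bounded_parabolic_region_Int_halfplane[OF \<open>a > 0\<close> assms(3)]
    by (rule finite_lattice_Int_bounded)
  ultimately show ?thesis
    by (rule finite_subset)
qed

text \<open>Near \<open>z\<close>, only summands from the compact truncation \<open>A \<inter> {x. fst x \<le> fst z + 1 - m}\<close>
  contribute.\<close>

lemma closed_minkowski_compact_truncations:
  assumes "\<And>K. compact (A \<inter> {x. fst x \<le> K})" "closed B" "\<And>y. y \<in> B \<Longrightarrow> m \<le> fst y"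
  shows "closed (minkowski A B)"
proof -
  have "z \<in> minkowski A B" if "z \<in> closure (minkowski A B)" for z
  proof -
    define K where "K = fst z + 1"
    define A' where "A' = A \<inter> {x. fst x \<le> K - m}"
    have "{x. fst x < K} \<inter> minkowski A B \<subseteq> minkowski A' B"
      unfolding minkowski_def A'_def using assms(3) by fastforce
    moreover have "closed (minkowski A' B)"
      unfolding minkowski_eq_UN A'_def using assms(1,2) by (rule compact_closed_sums)
    ultimately have "closure ({x. fst x < K} \<inter> minkowski A B) \<subseteq> minkowski A' B"
      by (rule closure_minimal)
    moreover have "open {x. fst x < K}"
      by (intro open_Collect_less continuous_intros)
    then have "z \<in> closure ({x. fst x < K} \<inter> minkowski A B)"
      using open_Int_closure_subset \<open>z \<in> closure _\<close> by (fastforce simp: K_def)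
    moreover have "minkowski A' B \<subseteq> minkowski A B"
      unfolding A'_def by (intro minkowski_mono) auto
    ultimately show ?thesis
      by blast
  qed
  then show ?thesis
    by (auto simp flip: closure_subset_eq)
qed

lemma supp_fmult_subset: "supp (fmult f g) \<subseteq> minkowski (supp f) (supp g)"
proof
  fix x
  assume "x \<in> supp (fmult f g)"
  then have "fmult f g x \<noteq> 0"
    by (simp add: supp_def)
  then have "{p. f p \<noteq> 0 \<and> g (x - p) \<noteq> 0} \<noteq> {}"
    unfolding fmult_def by (metis sum.empty)
  then obtain p where "p \<in> supp f" "x - p \<in> supp g"
    unfolding supp_def by blast
  moreover have "x = p + (x - p)"
    by simp
  ultimately show "x \<in> minkowski (supp f) (supp g)"
    unfolding minkowski_def by blast
qed

lemma nu_J_fmult_subset: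
  assumes "in_RJ N f" "in_RJ N g"
  shows "nu_J (fmult f g) \<subseteq> minkowski (nu_J f) (nu_J g)"
proof (rule nu_J_minimal)
  obtain m where m: "\<And>y. y \<in> nu_J g \<Longrightarrow> m \<le> fst y"
    using fst_bounded_below_nu_J[OF assms(2)] by blast
  show "closed (minkowski (nu_J f) (nu_J g))"
    by (rule closed_minkowski_compact_truncations[OF compact_nu_J_Int_halfplane[OF assms(1)] closed_nu_J m])
  show "convex (minkowski (nu_J f) (nu_J g))"
    by (intro convex_minkowski convex_nu_J)
  show "ray_stable (minkowski (nu_J f) (nu_J g))"
    by (intro ray_stable_minkowski_left ray_stable_nu_J)
  show "supp (fmult f g) \<subseteq> minkowski (nu_J f) (nu_J g)"
    using supp_fmult_subset minkowski_mono[OF supp_subset_nu_J supp_subset_nu_J] by blast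
qed

subsection \<open>Lexicographic minimisers and the reverse inclusion\<close>

definition lex_minimizer :: "real \<times> real \<Rightarrow> (real \<times> real) set \<Rightarrow> real \<times> real \<Rightarrow> bool" where
  "lex_minimizer w S p \<longleftrightarrow>
     p \<in> S \<and> (\<forall>x\<in>S. inner w p \<le> inner w x \<and> (inner w x = inner w p \<longrightarrow> snd p \<le> snd x))"

lemma lex_minimizer_exists:
  assumes "x\<^sub>0 \<in> S" "finite (S \<inter> {x. inner w x \<le> inner w x\<^sub>0})"
  obtains p where "lex_minimizer w S p"
proof -
  define T where "T = S \<inter> {x. inner w x \<le> inner w x\<^sub>0}"
  have "finite T" "T \<noteq> {}"
    using assms by (auto simp: T_def)
  then obtain p\<^sub>1 where "is_arg_min (inner w) (\<lambda>x. x \<in> T) p\<^sub>1"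
    using ex_is_arg_min_if_finite by blast
  then have p\<^sub>1: "p\<^sub>1 \<in> T" "\<And>x. x \<in> T \<Longrightarrow> inner w p\<^sub>1 \<le> inner w x"
    unfolding is_arg_min_linorder by blast+
  define T' where "T' = T \<inter> {x. inner w x = inner w p\<^sub>1}"
  have "finite T'" "T' \<noteq> {}"
    using \<open>finite T\<close> p\<^sub>1(1) by (auto simp: T'_def)
  then obtain p where "is_arg_min snd (\<lambda>x. x \<in> T') p"
    using ex_is_arg_min_if_finite by blast
  then have p: "p \<in> T'" "\<And>x. x \<in> T' \<Longrightarrow> snd p \<le> snd x"
    unfolding is_arg_min_linorder by blast+
  have "inner w p \<le> inner w x \<and> (inner w x = inner w p \<longrightarrow> snd p \<le> snd x)" if "x \<in> S" for x
  proof (cases "x \<in> T")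
    case True
    then show ?thesis
      using p p\<^sub>1 by (auto simp: T'_def)
  next
    case False
    then have "inner w x\<^sub>0 < inner w x"
      using \<open>x \<in> S\<close> by (simp add: T_def)
    moreover have "inner w p \<le> inner w x\<^sub>0"
      using p(1) by (simp add: T'_def T_def)
    ultimately show ?thesis
      by simp
  qed
  moreover have "p \<in> S"
    using p(1) by (simp add: T'_def T_def)
  ultimately have "lex_minimizer w S p"
    unfolding lex_minimizer_def by blast
  then show ?thesis
    by (rule that)
qed

text \<open>If \<open>fst w \<noteq> 0\<close>, a point is determined by its value under \<open>w\<close> and its second
  coordinate, so \<open>p + q\<close> has only one decomposition in \<open>supp f \<times> supp g\<close>.\<close>

lemma fmult_at_sum_of_lex_minimizers:
  assumes "fst w \<noteq> 0" "lex_minimizer w (supp f) p" "lex_minimizer w (supp g) q"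
  shows "fmult f g (p + q) = f p * g q"
proof -
  have "p' = p" if "f p' \<noteq> 0" "g (p + q - p') \<noteq> 0" for p'
  proof -
    define q' where "q' = p + q - p'"
    have "p' \<in> supp f" "q' \<in> supp g"
      using that by (simp_all add: supp_def q'_def)
    then have le: "inner w p \<le> inner w p'" "inner w q \<le> inner w q'"
      using assms(2,3) by (simp_all add: lex_minimizer_def)
    have sum: "inner w p' + inner w q' = inner w p + inner w q" "snd p' + snd q' = snd p + snd q"
      by (simp_all add: q'_def inner_diff_right inner_add_right)
    then have "inner w p' = inner w p" "inner w q' = inner w q"
      using le by linarith+
    then have "snd p \<le> snd p'" "snd q \<le> snd q'"
      using assms(2,3) \<open>p' \<in> supp f\<close> \<open>q' \<in> supp g\<close> by (simp_all add: lex_minimizer_def)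
    then have "snd p' = snd p"
      using sum by linarith
    moreover from this have "fst w * fst p' = fst w * fst p"
      using \<open>inner w p' = inner w p\<close> by (simp add: inner_prod_def)
    ultimately show "p' = p"
      using assms(1) by (simp add: prod_eq_iff)
  qed
  moreover have "f p \<noteq> 0" "g q \<noteq> 0"
    using assms(2,3) by (simp_all add: lex_minimizer_def supp_def)
  ultimately have "{p'. f p' \<noteq> 0 \<and> g (p + q - p') \<noteq> 0} = {p}"
    by auto
  then show ?thesis
    by (simp add: fmult_def)
qed

lemma sum_of_lex_minimizers_in_supp_fmult:
  assumes "in_RJ N f" "in_RJ N g" "N > 0" "f \<noteq> (\<lambda>_. 0)" "g \<noteq> (\<lambda>_. 0)" "fst w > 0"
  obtains p q where "lex_minimizer w (supp f) p" "lex_minimizer w (supp g) q"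
    "p + q \<in> supp (fmult f g)"
proof -
  have "\<exists>p. lex_minimizer w (supp h) p" if "in_RJ N h" "h \<noteq> (\<lambda>_. 0)" for h
  proof -
    obtain x\<^sub>0 where "h x\<^sub>0 \<noteq> 0"
      using \<open>h \<noteq> (\<lambda>_. 0)\<close> by (meson ext)
    then have "x\<^sub>0 \<in> supp h"
      by (simp add: supp_def)
    then show ?thesis
      using finite_supp_Int_halfplane[OF \<open>in_RJ N h\<close> assms(3,6)] lex_minimizer_exists by metis
  qed
  then obtain p q where p: "lex_minimizer w (supp f) p" and q: "lex_minimizer w (supp g) q"
    using assms(1,2,4,5) by blast
  have "fmult f g (p + q) = f p * g q"
    using assms(6) p q by (intro fmult_at_sum_of_lex_minimizers) simp_all
  then have "p + q \<in> supp (fmult f g)"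
    using p q by (simp add: supp_def lex_minimizer_def)
  with p q show ?thesis
    by (rule that)
qed

lemma le_of_le_add_pos_multiples:
  fixes x y d :: real
  assumes "\<And>\<epsilon>. 0 < \<epsilon> \<Longrightarrow> x \<le> y + \<epsilon> * d"
  shows "x \<le> y"
proof (rule field_le_epsilon)
  fix e :: real
  assume "0 < e"
  then have "x \<le> y + e / (\<bar>d\<bar> + 1) * d"
    by (intro assms) simp
  moreover have "e / (\<bar>d\<bar> + 1) * d \<le> e / (\<bar>d\<bar> + 1) * (\<bar>d\<bar> + 1)"
    using \<open>0 < e\<close> by (intro mult_left_mono) simp_all
  moreover have "e / (\<bar>d\<bar> + 1) * (\<bar>d\<bar> + 1) = e"
    by simp
  ultimately show "x \<le> y + e"
    by linarith
qed

text \<open>Tilting \<open>w\<close> to \<open>w + (\<epsilon>, 0)\<close> makes its sublevel sets on the supports finite;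
  the price \<open>\<epsilon> * fst\<close> vanishes as \<open>\<epsilon> \<rightarrow> 0\<close> since \<open>fst\<close> is bounded below on the supports.\<close>

lemma minkowski_supp_subset_halfplane:
  assumes "in_RJ N f" "in_RJ N g" "N > 0" "f \<noteq> (\<lambda>_. 0)" "g \<noteq> (\<lambda>_. 0)"
    and "0 \<le> fst w" "supp (fmult f g) \<subseteq> {x. t \<le> inner w x}"
  shows "minkowski (supp f) (supp g) \<subseteq> {x. t \<le> inner w x}"
proof
  fix z
  assume "z \<in> minkowski (supp f) (supp g)"
  then obtain u v where z: "z = u + v" and "u \<in> supp f" "v \<in> supp g"
    unfolding minkowski_def by blast
  obtain m\<^sub>f m\<^sub>g where m\<^sub>f: "\<And>x. x \<in> supp f \<Longrightarrow> m\<^sub>f \<le> fst x"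
    and m\<^sub>g: "\<And>x. x \<in> supp g \<Longrightarrow> m\<^sub>g \<le> fst x"
    using fst_bounded_below_nu_J[OF assms(1)] fst_bounded_below_nu_J[OF assms(2)]
      supp_subset_nu_J by (metis subsetD)
  have "t \<le> inner w z + \<epsilon> * (fst u - m\<^sub>f + (fst v - m\<^sub>g))" if "\<epsilon> > 0" for \<epsilon>
  proof -
    define w' where "w' = w + (\<epsilon>, 0)"
    have w': "inner w' x = inner w x + \<epsilon> * fst x" for x
      by (simp add: w'_def inner_add_left inner_prod_def algebra_simps)
    have "fst w' > 0"
      using assms(6) that by (simp add: w'_def)
    then obtain p q where p: "lex_minimizer w' (supp f) p" and q: "lex_minimizer w' (supp g) q"
      and "p + q \<in> supp (fmult f g)"
      using sum_of_lex_minimizers_in_supp_fmult[OF assms(1-5)] by blast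
    then have "t \<le> inner w p + inner w q"
      using assms(7) by (auto simp: inner_add_right)
    moreover have "inner w' p \<le> inner w' u" "inner w' q \<le> inner w' v" "p \<in> supp f" "q \<in> supp g"
      using p q \<open>u \<in> supp f\<close> \<open>v \<in> supp g\<close> by (simp_all add: lex_minimizer_def)
    moreover from this have "\<epsilon> * m\<^sub>f \<le> \<epsilon> * fst p" "\<epsilon> * m\<^sub>g \<le> \<epsilon> * fst q"
      using m\<^sub>f m\<^sub>g that by simp_all
    ultimately show ?thesis
      unfolding z w' by (simp add: inner_add_right algebra_simps)
  qed
  then show "z \<in> {x. t \<le> inner w x}"
    using le_of_le_add_pos_multiples by blast
qed

lemma nu_J_subset_halfplane:
  "supp f \<subseteq> {x. t \<le> inner w x} \<Longrightarrow> 0 \<le> fst w \<Longrightarrow> nu_J f \<subseteq> {x. t \<le> inner w x}"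
  by (intro nu_J_minimal closed_halfspace_ge convex_halfspace_ge ray_stable_halfplane)

lemma minkowski_nu_J_subset_halfplane:
  assumes "minkowski (supp f) (supp g) \<subseteq> {x. t \<le> inner w x}" "0 \<le> fst w"
  shows "minkowski (nu_J f) (nu_J g) \<subseteq> {x. t \<le> inner w x}"
proof
  fix z
  assume "z \<in> minkowski (nu_J f) (nu_J g)"
  then obtain u v where z: "z = u + v" and "u \<in> nu_J f" "v \<in> nu_J g"
    unfolding minkowski_def by blast
  have "t - inner w v' \<le> inner w u" if "v' \<in> supp g" for v'
  proof -
    have "t \<le> inner w (u' + v')" if "u' \<in> supp f" for u'
      using assms(1) that \<open>v' \<in> supp g\<close> unfolding minkowski_def by blast
    then have "supp f \<subseteq> {x. t - inner w v' \<le> inner w x}"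
      by (fastforce simp: inner_add_right)
    then show ?thesis
      using nu_J_subset_halfplane[OF _ assms(2)] \<open>u \<in> nu_J f\<close> by blast
  qed
  then have "supp g \<subseteq> {x. t - inner w u \<le> inner w x}"
    by force
  then have "t - inner w u \<le> inner w v"
    using nu_J_subset_halfplane[OF _ assms(2)] \<open>v \<in> nu_J g\<close> by blast
  then show "z \<in> {x. t \<le> inner w x}"
    by (simp add: z inner_add_right)
qed

lemma minkowski_nu_J_subset_nu_J_fmult:
  assumes "N > 0" "in_RJ N f" "in_RJ N g" "f \<noteq> (\<lambda>_. 0)" "g \<noteq> (\<lambda>_. 0)"
  shows "minkowski (nu_J f) (nu_J g) \<subseteq> nu_J (fmult f g)"
proof
  fix z
  assume z: "z \<in> minkowski (nu_J f) (nu_J g)"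
  show "z \<in> nu_J (fmult f g)"
  proof (rule ccontr)
    assume "z \<notin> nu_J (fmult f g)"
    then obtain w t where "inner w z < t" and "\<forall>x\<in>nu_J (fmult f g). t < inner w x"
      using separating_hyperplane_closed_point[OF convex_nu_J closed_nu_J] by blast
    then have H: "nu_J (fmult f g) \<subseteq> {x. t \<le> inner w x}"
      by force
    obtain p q where "p + q \<in> supp (fmult f g)"
      using sum_of_lex_minimizers_in_supp_fmult[OF assms(2,3,1,4,5), of "(1, 0)"]
      by (metis fst_conv zero_less_one)
    then have "0 \<le> fst w"
      using ray_stable_halfplane_normal[OF ray_stable_nu_J _ H] supp_subset_nu_J by blast
    moreover have "supp (fmult f g) \<subseteq> {x. t \<le> inner w x}"
      using H supp_subset_nu_J by blast
    ultimately have "minkowski (nu_J f) (nu_J g) \<subseteq> {x. t \<le> inner w x}"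
      by (intro minkowski_nu_J_subset_halfplane minkowski_supp_subset_halfplane[OF assms(2,3,1,4,5)])
    with z \<open>inner w z < t\<close> show False
      by auto
  qed
qed

theorem theorem4p5:
  fixes N :: nat and f g :: fseries
  assumes "N > 0"
    and "in_RJ N f" and "in_RJ N g"
    and "f \<noteq> (\<lambda>_. 0)" and "g \<noteq> (\<lambda>_. 0)"
  shows "nu_J (fmult f g) = minkowski (nu_J f) (nu_J g)"
  using nu_J_fmult_subset[OF assms(2,3)] minkowski_nu_J_subset_nu_J_fmult[OF assms]
  by (rule antisym)

end
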